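(* Assume Assumption A and let $(A_i,\tau_i)_{i=1}^n$ be a solution of system (S) with nonnegative initial data $\varphi_i\in X_\alpha$ satisfying $\int_{-\tau_{i0}}^0 f_i(Z_{i\varphi}(\sigma))\,d\sigma=1$ for all $i=1,\dots,n$. Then for each $i=1,\dots,n$ there exists $t_i^*>0$ such that $t_i^*-\tau_i(t_i^* )=0$.
   Context: For $\alpha>0$, $X_\alpha:=\{\phi\in C((-\infty,0]): e^{-\alpha|\cdot|}\phi(\cdot)\in BUC((-\infty,0])\cap \mathrm{Lip}((-\infty,0])\}$. The $n$-species system (S): for $i=1,\dots,n$, $$A_i'(t)=-\mu_{A_i}A_i(t)+\beta_i e^{-\mu_{J_i}\tau_i(t)}\frac{f_i(Z_i(t))}{f_i(Z_i(t-\tau_i(t)))}A_i(t-\tau_i(t)),\quad t\ge0,$$ $$\int_{t-\tau_i(t)}^{t}f_i(Z_i(\sigma))\,d\sigma=\int_{-\tau_{i0}}^{0}f_i(Z_{i\varphi}(\sigma))\,d\sigma,\quad t\ge0,$$ with $A_i(t)=\varphi_i(t)$ for $t\le0$, $\tau_i(0)=\tau_{i0}\ge0$, where $Z_i(t)=\sum_{j=1}^n\zeta_{ij}A_j(t)$, $Z_{i\varphi}(t)=\sum_{j=1}^n\zeta_{ij}\varphi_j(t)$, $\zeta_{ij}\ge0$. A solution consists of continuous $A_i:\mathbb{R}\to[0,\infty)$, differentiable on $[0,\infty)$, and $\tau_i:[0,\infty)\to[0,\infty)$ satisfying these equations for all $t\ge0$. Assumption A: for each $i$, (i) $\mu_{A_i}>0$,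 $\mu_{J_i}>0$, $\beta_i>0$, $\zeta_{ii}>0$; (ii) $f_i:\mathbb{R}\to(0,\infty)$ is Lipschitz continuous and continuously differentiable with $f_i>0$, $f_i'\le0$ on $\mathbb{R}$, $\lim_{x\to+\infty}f_i(x)=0$, and $\sup_{x\ge0}\frac{f_i(x)}{f_i(cx)}<+\infty$ for every $c\ge1$. *)

theory Defs
  imports "HOL-Analysis.Analysis"
begin

definition BUC_neg :: "(real \<Rightarrow> real) \<Rightarrow> bool" where
  "BUC_neg g \<longleftrightarrow> bounded (g ` {..0}) \<and> uniformly_continuous_on {..0} g"

definition Lip_neg :: "(real \<Rightarrow> real) \<Rightarrow> bool" where
  "Lip_neg g \<longleftrightarrow> (\<exists>C. C-lipschitz_on {..0} g)"

definition X_alpha :: "real \<Rightarrow> (real \<Rightarrow> real) set" where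
  "X_alpha \<alpha> = {\<phi>. continuous_on {..0} \<phi> \<and>
      BUC_neg (\<lambda>s. exp (- \<alpha> * \<bar>s\<bar>) * \<phi> s) \<and>
      Lip_neg (\<lambda>s. exp (- \<alpha> * \<bar>s\<bar>) * \<phi> s)}"

definition assumption_A ::
  "nat \<Rightarrow> (nat \<Rightarrow> real) \<Rightarrow> (nat \<Rightarrow> real) \<Rightarrow> (nat \<Rightarrow> real) \<Rightarrow> (nat \<Rightarrow> nat \<Rightarrow> real)
   \<Rightarrow> (nat \<Rightarrow> real \<Rightarrow> real) \<Rightarrow> bool" where
  "assumption_A n muA muJ beta zeta f \<longleftrightarrow>
     (\<forall>i<n. muA i > 0 \<and> muJ i > 0 \<and> beta i > 0 \<and> zeta i i > 0 \<and>
        (\<forall>j<n. zeta i j \<ge> 0) \<and>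
        (\<exists>L. L-lipschitz_on UNIV (f i)) \<and>
        (\<exists>f'. (\<forall>x. (f i has_real_derivative f' x) (at x)) \<and> continuous_on UNIV f' \<and>
              (\<forall>x. f' x \<le> 0)) \<and>
        (\<forall>x. f i x > 0) \<and>
        ((f i) \<longlongrightarrow> 0) at_top \<and>
        (\<forall>c\<ge>1. bdd_above ((\<lambda>x. f i x / f i (c * x)) ` {0..})))"

definition is_solution_S ::
  "nat \<Rightarrow> (nat \<Rightarrow> real) \<Rightarrow> (nat \<Rightarrow> real) \<Rightarrow> (nat \<Rightarrow> real) \<Rightarrow> (nat \<Rightarrow> nat \<Rightarrow> real)
   \<Rightarrow> (nat \<Rightarrow> real \<Rightarrow> real) \<Rightarrow> (nat \<Rightarrow> real \<Rightarrow> real) \<Rightarrow> (nat \<Rightarrow> real)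
   \<Rightarrow> (nat \<Rightarrow> real \<Rightarrow> real) \<Rightarrow> (nat \<Rightarrow> real \<Rightarrow> real) \<Rightarrow> bool" where
  "is_solution_S n muA muJ beta zeta f \<phi> tau0 A \<tau> \<longleftrightarrow>
     (\<forall>i<n.
        continuous_on UNIV (A i) \<and>
        (\<forall>t. A i t \<ge> 0) \<and>
        (\<forall>t\<le>0. A i t = \<phi> i t) \<and>
        (\<forall>t\<ge>0. \<tau> i t \<ge> 0) \<and>
        \<tau> i 0 = tau0 i \<and>
        (\<forall>t\<ge>0.
           ((A i) has_real_derivative
              (- muA i * A i t
               + beta i * exp (- muJ i * \<tau> i t)
                 * f i (\<Sum>j<n. zeta i j * A j t)
                 / f i (\<Sum>j<n. zeta i j * A j (t - \<tau> i t))
                 * A i (t - \<tau> i t))) (at t within {0..})) \<and>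
        (\<forall>t\<ge>0.
           integral {t - \<tau> i t..t} (\<lambda>\<sigma>. f i (\<Sum>j<n. zeta i j * A j \<sigma>))
           = integral {- tau0 i..0} (\<lambda>\<sigma>. f i (\<Sum>j<n. zeta i j * \<phi> j \<sigma>))))"

end

theory Submission
  imports Defs
begin

text \<open>
  Write \<open>g = f\<^sub>i \<circ> Z\<^sub>i\<close> for the maturation speed. Since the integrals of \<open>g\<close> over
  \<open>[t - \<tau>(t), t]\<close> and over \<open>[-\<tau>\<^sub>0, 0]\<close> both equal 1 and \<open>g > 0\<close>, we have \<open>t - \<tau>(t) = 0\<close>
  exactly when the integral of \<open>g\<close> over \<open>[0, t]\<close> equals 1. Such a \<open>t\<close> exists as soon as all
  populations are bounded on \<open>[0, \<infinity>)\<close>, because \<open>g\<close> is then bounded below by a positive constant.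

  Boundedness: let species \<open>j\<close> attain at time \<open>t > 0\<close> the running maximum \<open>M\<close> of all
  species. Then \<open>A\<^sub>j'(t) \<ge> 0\<close>, and the ratio condition of Assumption A bounds
  \<open>f\<^sub>j(Z\<^sub>j(t)) / f\<^sub>j(Z\<^sub>j(t - \<tau>))\<close> uniformly, which forces \<open>A\<^sub>j(t - \<tau>) \<ge> c M\<close> and \<open>\<tau> \<le> L\<close>
  with \<open>c\<close> and \<open>L\<close> independent of \<open>M\<close>. On the maturation window \<open>A\<^sub>j\<close> decays at rate at most
  \<open>\<mu>\<^sub>A\<close>, so \<open>Z\<^sub>j \<ge> \<zeta>\<^sub>j\<^sub>j exp(-\<mu>\<^sub>A L) c M\<close> there, and the maturation integral, which equals 1, is
  at most \<open>L f\<^sub>j(\<zeta>\<^sub>j\<^sub>j exp(-\<mu>\<^sub>A L) c M)\<close>. As \<open>f\<^sub>j\<close> tends to 0, this bounds \<open>M\<close>.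
\<close>

lemma integral_pos_of_continuous_pos:
  fixes g :: "real \<Rightarrow> real"
  assumes "continuous_on {a..b} g" "\<And>x. x \<in> {a..b} \<Longrightarrow> 0 < g x" "a < b"
  shows "0 < integral {a..b} g"
proof -
  obtain x where x: "x \<in> {a..b}" "\<And>y. y \<in> {a..b} \<Longrightarrow> g x \<le> g y"
    using continuous_attains_inf[of "{a..b}" g] assms by auto
  have "0 < (b - a) * g x" using assms x by simp
  also have "\<dots> = integral {a..b} (\<lambda>_. g x)" using assms(3) by simp
  also have "\<dots> \<le> integral {a..b} g"
    using assms(1) x by (intro integral_le integrable_continuous_real) auto
  finally show ?thesis .
qed

lemma integral_strict_mono_interval:
  fixes g :: "real \<Rightarrow> real"
  assumes g: "continuous_on {a..d} g" "\<And>x. x \<in> {a..d} \<Longrightarrow> 0 < g x"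
    and "a \<le> b" "b \<le> c" "c \<le> d" and "a < b \<or> c < d"
  shows "integral {b..c} g < integral {a..d} g"
proof -
  have cont: "continuous_on {x..y} g" if "a \<le> x" "y \<le> d" for x y
    using continuous_on_subset[OF g(1)] that by auto
  have nonneg: "0 \<le> integral {x..y} g" if "a \<le> x" "y \<le> d" for x y
    using cont[OF that] g(2) that
    by (intro integral_nonneg integrable_continuous_real) (auto intro: less_imp_le)
  have pos: "0 < integral {x..y} g" if "a \<le> x" "y \<le> d" "x < y" for x y
    using cont[OF that(1,2)] g(2) that by (intro integral_pos_of_continuous_pos) auto
  have "integral {a..d} g = integral {a..c} g + integral {c..d} g"
    using assms(3-5) integrable_continuous_real[OF g(1)]
    by (simp add: Henstock_Kurzweil_Integration.integral_combine)
  also have "integral {a..c} g = integral {a..b} g + integral {b..c} g"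
    using assms(3-5) integrable_continuous_real[OF cont[of a c]]
    by (simp add: Henstock_Kurzweil_Integration.integral_combine)
  finally have "integral {a..d} g = integral {b..c} g + (integral {a..b} g + integral {c..d} g)"
    by simp
  moreover have "0 < integral {a..b} g + integral {c..d} g"
    using assms(3-6) nonneg[of a b] nonneg[of c d] pos[of a b] pos[of c d] by fastforce
  ultimately show ?thesis by linarith
qed

lemma integral_reaches_level:
  fixes g :: "real \<Rightarrow> real"
  assumes "continuous_on {a..} g" "\<And>x. a \<le> x \<Longrightarrow> d \<le> g x" "0 < d" "0 < y"
  shows "\<exists>t>a. integral {a..t} g = y"
proof -
  define G where "G x = integral {a..x} g" for x
  define b where "b = a + y / d"
  have int: "g integrable_on {a..b}"
    using assms(1) by (intro integrable_continuous_real) (auto intro: continuous_on_subset)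
  have "y = integral {a..b} (\<lambda>_. d)" using assms(3,4) unfolding b_def by simp
  also have "\<dots> \<le> G b" unfolding G_def using int assms(2) by (intro integral_le) auto
  finally have "y \<le> G b" .
  moreover have "continuous_on {a..b} G"
    unfolding G_def by (rule indefinite_integral_continuous_1[OF int])
  moreover have "G a \<le> y" "a \<le> b" using assms(3,4) unfolding G_def b_def by auto
  ultimately obtain t where "a \<le> t" "G t = y" using IVT'[of G a y b] by auto
  moreover have "t \<noteq> a" using \<open>G t = y\<close> assms(4) unfolding G_def by auto
  ultimately have "a < t" "integral {a..t} g = y" unfolding G_def by auto
  then show ?thesis by blast
qed

lemma gronwall_lower_bound:
  fixes h h' :: "real \<Rightarrow> real"
  assumes "s \<le> w" "continuous_on {s..w} h"
    and "\<And>x. s < x \<Longrightarrow> x < w \<Longrightarrow> (h has_real_derivative h' x) (at x)"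
    and "\<And>x. s < x \<Longrightarrow> x < w \<Longrightarrow> - \<mu> * h x \<le> h' x"
  shows "exp (- \<mu> * (w - s)) * h s \<le> h w"
proof -
  have "exp (\<mu> * s) * h s \<le> exp (\<mu> * w) * h w"
  proof (rule DERIV_nonneg_imp_increasing_open[OF assms(1)])
    fix x assume x: "s < x" "x < w"
    have "((\<lambda>x. exp (\<mu> * x) * h x) has_real_derivative exp (\<mu> * x) * (\<mu> * h x + h' x)) (at x)"
      using assms(3)[OF x] by (auto intro!: derivative_eq_intros simp: algebra_simps)
    moreover have "0 \<le> exp (\<mu> * x) * (\<mu> * h x + h' x)" using assms(4)[OF x] by simp
    ultimately show "\<exists>y. ((\<lambda>x. exp (\<mu> * x) * h x) has_real_derivative y) (at x) \<and> 0 \<le> y"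
      by blast
  qed (use assms(2) in \<open>intro continuous_intros\<close>)
  then show ?thesis
    by (simp add: exp_diff algebra_simps pos_divide_le_eq flip: exp_add)
qed

lemma deriv_nonneg_at_left_max:
  fixes h :: "real \<Rightarrow> real"
  assumes "(h has_real_derivative D) (at t)" "a < t" "\<And>u. a \<le> u \<Longrightarrow> u \<le> t \<Longrightarrow> h u \<le> h t"
  shows "0 \<le> D"
proof (rule ccontr)
  assume "\<not> 0 \<le> D"
  then obtain e where e: "0 < e" "\<And>k. 0 < k \<Longrightarrow> k < e \<Longrightarrow> h t < h (t - k)"
    using DERIV_neg_dec_left[OF assms(1)] by auto
  define k where "k = min (e / 2) (t - a)"
  have "h t < h (t - k)" using e assms(2) unfolding k_def by (intro e(2)) auto
  moreover have "h (t - k) \<le> h t" using e assms(2) unfolding k_def by (intro assms(3)) auto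
  ultimately show False by simp
qed

lemma finite_family_attains_sup:
  fixes F :: "'i \<Rightarrow> 'a::topological_space \<Rightarrow> real"
  assumes "finite I" "I \<noteq> {}" "compact S" "S \<noteq> {}" "\<And>i. i \<in> I \<Longrightarrow> continuous_on S (F i)"
  shows "\<exists>i\<in>I. \<exists>x\<in>S. \<forall>k\<in>I. \<forall>y\<in>S. F k y \<le> F i x"
proof -
  have "compact (\<Union>i\<in>I. F i ` S)"
    using assms by (intro compact_UN compact_continuous_image) auto
  moreover have "(\<Union>i\<in>I. F i ` S) \<noteq> {}" using assms(2,4) by auto
  ultimately obtain m where m: "m \<in> (\<Union>i\<in>I. F i ` S)" "\<And>y. y \<in> (\<Union>i\<in>I. F i ` S) \<Longrightarrow> y \<le> m"
    using compact_attains_sup by metis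
  then obtain i x where "i \<in> I" "x \<in> S" "m = F i x" by blast
  with m(2) show ?thesis by blast
qed

locale delay_system =
  fixes n :: nat and muA muJ beta tau0 :: "nat \<Rightarrow> real" and zeta :: "nat \<Rightarrow> nat \<Rightarrow> real"
    and f A \<tau> :: "nat \<Rightarrow> real \<Rightarrow> real"
  assumes muA_pos: "i < n \<Longrightarrow> 0 < muA i"
    and muJ_pos: "i < n \<Longrightarrow> 0 < muJ i"
    and beta_pos: "i < n \<Longrightarrow> 0 < beta i"
    and zeta_diag_pos: "i < n \<Longrightarrow> 0 < zeta i i"
    and zeta_nonneg: "i < n \<Longrightarrow> j < n \<Longrightarrow> 0 \<le> zeta i j"
    and f_pos: "i < n \<Longrightarrow> 0 < f i x"
    and f_antimono: "i < n \<Longrightarrow> antimono (f i)"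
    and f_continuous: "i < n \<Longrightarrow> continuous_on UNIV (f i)"
    and f_tendsto_0: "i < n \<Longrightarrow> (f i \<longlongrightarrow> 0) at_top"
    and f_ratio_bdd: "i < n \<Longrightarrow> 1 \<le> c \<Longrightarrow> bdd_above ((\<lambda>x. f i x / f i (c * x)) ` {0..})"
    and A_continuous: "i < n \<Longrightarrow> continuous_on UNIV (A i)"
    and A_nonneg: "i < n \<Longrightarrow> 0 \<le> A i t"
    and tau_nonneg: "i < n \<Longrightarrow> 0 \<le> t \<Longrightarrow> 0 \<le> \<tau> i t"
    and tau0_nonneg: "i < n \<Longrightarrow> 0 \<le> tau0 i"
    and A_deriv: "i < n \<Longrightarrow> 0 \<le> t \<Longrightarrow>
      (A i has_real_derivative
         - muA i * A i t
         + beta i * exp (- muJ i * \<tau> i t) * f i (\<Sum>j<n. zeta i j * A j t)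
           / f i (\<Sum>j<n. zeta i j * A j (t - \<tau> i t)) * A i (t - \<tau> i t)) (at t within {0..})"
    and delay_integral: "i < n \<Longrightarrow> 0 \<le> t \<Longrightarrow>
      integral {t - \<tau> i t..t} (\<lambda>\<sigma>. f i (\<Sum>j<n. zeta i j * A j \<sigma>)) = 1"
    and history_integral: "i < n \<Longrightarrow>
      integral {- tau0 i..0} (\<lambda>\<sigma>. f i (\<Sum>j<n. zeta i j * A j \<sigma>)) = 1"
begin

definition Z :: "nat \<Rightarrow> real \<Rightarrow> real" where
  "Z i t = (\<Sum>j<n. zeta i j * A j t)"

definition maturation_speed :: "nat \<Rightarrow> real \<Rightarrow> real" where
  "maturation_speed i t = f i (Z i t)"

definition recruitment :: "nat \<Rightarrow> real \<Rightarrow> real" where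
  "recruitment i t =
     beta i * exp (- muJ i * \<tau> i t) * f i (Z i t) / f i (Z i (t - \<tau> i t)) * A i (t - \<tau> i t)"

lemma Z_continuous: "continuous_on S (Z i)"
  unfolding Z_def by (intro continuous_intros continuous_on_subset[OF A_continuous]) auto

lemma maturation_speed_continuous: "i < n \<Longrightarrow> continuous_on S (maturation_speed i)"
  unfolding maturation_speed_def
  by (rule continuous_on_compose2[OF f_continuous Z_continuous]) auto

lemma maturation_speed_pos: "i < n \<Longrightarrow> 0 < maturation_speed i t"
  unfolding maturation_speed_def by (rule f_pos)

lemma Z_ge_diag: "i < n \<Longrightarrow> zeta i i * A i t \<le> Z i t"
  unfolding Z_def
  by (rule member_le_sum[where f = "\<lambda>j. zeta i j * A j t"])
    (auto intro: mult_nonneg_nonneg zeta_nonneg A_nonneg)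

lemma Z_le: "i < n \<Longrightarrow> (\<And>k. k < n \<Longrightarrow> A k t \<le> M) \<Longrightarrow> Z i t \<le> (\<Sum>j<n. zeta i j) * M"
  unfolding Z_def sum_distrib_right by (intro sum_mono mult_left_mono) (auto intro: zeta_nonneg)

lemma A_has_deriv:
  assumes "i < n" "0 < t"
  shows "(A i has_real_derivative - muA i * A i t + recruitment i t) (at t)"
proof -
  have "at t within {0..} = at t" using assms(2) by (intro at_within_interior) auto
  then show ?thesis using A_deriv[OF assms(1), of t] assms(2) by (simp add: recruitment_def Z_def)
qed

lemma recruitment_nonneg: "i < n \<Longrightarrow> 0 \<le> recruitment i t"
  unfolding recruitment_def
  by (intro mult_nonneg_nonneg divide_nonneg_nonneg less_imp_le[OF beta_pos] less_imp_le[OF f_pos]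
      A_nonneg) auto

lemma maturation_speed_eq: "maturation_speed i = (\<lambda>\<sigma>. f i (\<Sum>j<n. zeta i j * A j \<sigma>))"
  by (simp add: fun_eq_iff maturation_speed_def Z_def)

lemma delay_integral_eq: "i < n \<Longrightarrow> 0 \<le> t \<Longrightarrow> integral {t - \<tau> i t..t} (maturation_speed i) = 1"
  unfolding maturation_speed_eq by (rule delay_integral)

lemma history_integral_eq: "i < n \<Longrightarrow> integral {- tau0 i..0} (maturation_speed i) = 1"
  unfolding maturation_speed_eq by (rule history_integral)

lemma delay_lower_bound:
  assumes "i < n" "0 \<le> t"
  shows "- tau0 i \<le> t - \<tau> i t"
proof (rule ccontr)
  assume "\<not> ?thesis"
  then have "integral {- tau0 i..0} (maturation_speed i) < integral {t - \<tau> i t..t} (maturation_speed i)"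
    using assms tau0_nonneg
    by (intro integral_strict_mono_interval maturation_speed_continuous maturation_speed_pos) auto
  then show False
    using history_integral_eq[OF assms(1)] delay_integral_eq[OF assms] by simp
qed

text \<open>
  \<open>peak_fraction\<close> and \<open>delay_cap\<close> are the constants \<open>c\<close> and \<open>L\<close> above; they come from the balance
  \<open>\<mu>\<^sub>A M \<le> \<beta> exp(-\<mu>\<^sub>J \<tau>) B A\<^sub>j(t - \<tau>)\<close> at a running maximum \<open>M\<close>, where \<open>B\<close> is the
  ratio bound.
\<close>

definition ratio_bound :: "nat \<Rightarrow> real" where
  "ratio_bound j = (SUP x\<in>{0..}. f j x / f j ((\<Sum>l<n. zeta j l) / zeta j j * x))"

definition peak_fraction :: "nat \<Rightarrow> real" where
  "peak_fraction j = muA j / (beta j * ratio_bound j)"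

definition delay_cap :: "nat \<Rightarrow> real" where
  "delay_cap j = - ln (peak_fraction j) / muJ j"

lemma ratio_le_ratio_bound:
  assumes "j < n" "0 \<le> x"
  shows "f j x / f j ((\<Sum>l<n. zeta j l) / zeta j j * x) \<le> ratio_bound j"
proof -
  have "zeta j j \<le> (\<Sum>l<n. zeta j l)"
    using assms(1) by (intro member_le_sum zeta_nonneg) auto
  then have "1 \<le> (\<Sum>l<n. zeta j l) / zeta j j" using zeta_diag_pos[OF assms(1)] by simp
  then show ?thesis
    unfolding ratio_bound_def using assms by (intro cSUP_upper f_ratio_bdd) auto
qed

lemma ratio_bound_pos: "j < n \<Longrightarrow> 0 < ratio_bound j"
  using ratio_le_ratio_bound[of j 0] f_pos[of j 0] by simp

lemma peak_fraction_pos: "j < n \<Longrightarrow> 0 < peak_fraction j"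
  unfolding peak_fraction_def using muA_pos beta_pos ratio_bound_pos by simp

lemma crowding_ratio_at_peak:
  assumes j: "j < n" and t: "0 < t" and pos: "0 < A j t"
    and peak: "\<And>k u. k < n \<Longrightarrow> - tau0 j \<le> u \<Longrightarrow> u \<le> t \<Longrightarrow> A k u \<le> A j t"
  shows "f j (Z j t) / f j (Z j (t - \<tau> j t)) \<le> ratio_bound j"
proof -
  let ?K = "\<Sum>l<n. zeta j l"
  have num: "f j (Z j t) \<le> f j (zeta j j * A j t)"
    by (rule antimonoD[OF f_antimono[OF j] Z_ge_diag[OF j]])
  have "Z j (t - \<tau> j t) \<le> ?K / zeta j j * (zeta j j * A j t)"
    using Z_le[OF j, of "t - \<tau> j t" "A j t"] peak delay_lower_bound[OF j] tau_nonneg[OF j] t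
      zeta_diag_pos[OF j]
    by simp
  then have den: "f j (?K / zeta j j * (zeta j j * A j t)) \<le> f j (Z j (t - \<tau> j t))"
    by (rule antimonoD[OF f_antimono[OF j]])
  have "f j (Z j t) / f j (Z j (t - \<tau> j t))
      \<le> f j (zeta j j * A j t) / f j (?K / zeta j j * (zeta j j * A j t))"
    by (rule frac_le) (use num den f_pos[OF j] in \<open>auto intro: less_imp_le\<close>)
  also have "\<dots> \<le> ratio_bound j"
    using pos zeta_diag_pos[OF j] by (intro ratio_le_ratio_bound[OF j]) simp
  finally show ?thesis .
qed

lemma delayed_value_at_peak:
  assumes j: "j < n" and t: "0 < t" and pos: "0 < A j t"
    and peak: "\<And>k u. k < n \<Longrightarrow> - tau0 j \<le> u \<Longrightarrow> u \<le> t \<Longrightarrow> A k u \<le> A j t"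
  shows "peak_fraction j * A j t \<le> A j (t - \<tau> j t)" and "\<tau> j t \<le> delay_cap j"
proof -
  define s where "s = t - \<tau> j t"
  define E where "E = exp (- muJ j * \<tau> j t)"
  define R where "R = f j (Z j t) / f j (Z j s)"
  define B where "B = ratio_bound j"
  have "0 \<le> - muA j * A j t + recruitment j t"
    using peak[OF j] tau0_nonneg[OF j] t
    by (intro deriv_nonneg_at_left_max[OF A_has_deriv[OF j t], of "- tau0 j"]) auto
  then have balance: "muA j * A j t \<le> beta j * E * R * A j s"
    unfolding recruitment_def E_def R_def s_def by simp
  have R: "R \<le> B" unfolding R_def B_def s_def by (rule crowding_ratio_at_peak[OF j t pos peak])
  have E: "0 < E" "E \<le> 1" using tau_nonneg[OF j] t muJ_pos[OF j] unfolding E_def by auto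
  have R0: "0 \<le> R" unfolding R_def using f_pos[OF j] by (intro divide_nonneg_nonneg less_imp_le)
  have a: "0 \<le> A j s" "A j s \<le> A j t"
    using A_nonneg[OF j] peak[OF j] delay_lower_bound[OF j] tau_nonneg[OF j] t unfolding s_def
    by auto
  have B: "0 < B" unfolding B_def by (rule ratio_bound_pos[OF j])
  have beta: "0 < beta j" by (rule beta_pos[OF j])
  have "beta j * E * R * A j s \<le> beta j * E * B * A j t"
    using R a R0 E beta B by (intro mult_mono mult_left_mono) auto
  with balance have "muA j * A j t \<le> beta j * E * B * A j t" by linarith
  then have "muA j \<le> (beta j * B) * E" using pos by (simp add: algebra_simps)
  then have "peak_fraction j \<le> E"
    using beta B unfolding peak_fraction_def B_def by (simp add: pos_divide_le_eq mult.commute)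
  then have "ln (peak_fraction j) \<le> ln E" using peak_fraction_pos[OF j] by simp
  also have "ln E = - muJ j * \<tau> j t" unfolding E_def by simp
  finally show "\<tau> j t \<le> delay_cap j"
    using muJ_pos[OF j] unfolding delay_cap_def by (simp add: field_simps)
  have "E * R \<le> 1 * B" using E R R0 B by (intro mult_mono) auto
  then have "beta j * (E * R) * A j s \<le> beta j * B * A j s"
    using a beta by (intro mult_right_mono mult_left_mono) auto
  with balance have "muA j * A j t \<le> A j s * (beta j * B)" by (simp add: ac_simps)
  then have "peak_fraction j * A j t \<le> A j s"
    using beta B unfolding peak_fraction_def B_def by (simp add: pos_divide_le_eq)
  then show "peak_fraction j * A j t \<le> A j (t - \<tau> j t)" unfolding s_def .
qed

lemma lower_bound_on_maturation_window:
  assumes j: "j < n" and t: "0 < t" and pos: "0 < A j t"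
    and peak: "\<And>k u. k < n \<Longrightarrow> - tau0 j \<le> u \<Longrightarrow> u \<le> t \<Longrightarrow> A k u \<le> A j t"
    and w: "0 \<le> t - \<tau> j t" "t - \<tau> j t \<le> w" "w \<le> t"
  shows "exp (- muA j * delay_cap j) * peak_fraction j * A j t \<le> A j w"
proof -
  define s where "s = t - \<tau> j t"
  have "exp (- muA j * delay_cap j) \<le> exp (- muA j * (w - s))"
    using delayed_value_at_peak(2)[OF j t pos peak] w muA_pos[OF j] unfolding s_def by simp
  moreover have "peak_fraction j * A j t \<le> A j s"
    unfolding s_def by (rule delayed_value_at_peak(1)[OF j t pos peak])
  ultimately have "exp (- muA j * delay_cap j) * (peak_fraction j * A j t)
      \<le> exp (- muA j * (w - s)) * A j s"
    using peak_fraction_pos[OF j] pos by (intro mult_mono) auto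
  also have "\<dots> \<le> A j w"
  proof (rule gronwall_lower_bound)
    show "s \<le> w" "continuous_on {s..w} (A j)"
      using w continuous_on_subset[OF A_continuous[OF j]] unfolding s_def by auto
    fix x assume "s < x" "x < w"
    then show "(A j has_real_derivative - muA j * A j x + recruitment j x) (at x)"
      using w unfolding s_def by (intro A_has_deriv[OF j]) simp
    show "- muA j * A j x \<le> - muA j * A j x + recruitment j x"
      using recruitment_nonneg[OF j] by simp
  qed
  finally show ?thesis by (simp add: mult.assoc)
qed

lemma peak_estimate:
  assumes j: "j < n" and t: "0 < t" and pos: "0 < A j t"
    and peak: "\<And>k u. k < n \<Longrightarrow> - tau0 j \<le> u \<Longrightarrow> u \<le> t \<Longrightarrow> A k u \<le> A j t"
    and history: "\<And>k u. k < n \<Longrightarrow> - tau0 j \<le> u \<Longrightarrow> u \<le> 0 \<Longrightarrow> A k u \<le> P"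
  shows "peak_fraction j * A j t \<le> P \<or>
    1 \<le> delay_cap j * f j (zeta j j * exp (- muA j * delay_cap j) * peak_fraction j * A j t)"
proof (cases "t - \<tau> j t < 0")
  case True
  then have "A j (t - \<tau> j t) \<le> P" using history[OF j] delay_lower_bound[OF j] t by simp
  then show ?thesis using delayed_value_at_peak(1)[OF j t pos peak] by simp
next
  case False
  define s where "s = t - \<tau> j t"
  define v where "v = f j (zeta j j * exp (- muA j * delay_cap j) * peak_fraction j * A j t)"
  have speed: "maturation_speed j w \<le> v" if "s \<le> w" "w \<le> t" for w
  proof -
    have "zeta j j * exp (- muA j * delay_cap j) * peak_fraction j * A j t \<le> zeta j j * A j w"
      using lower_bound_on_maturation_window[OF j t pos peak] False that zeta_diag_pos[OF j]
      unfolding s_def by (simp add: mult.assoc)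
    also have "\<dots> \<le> Z j w" by (rule Z_ge_diag[OF j])
    finally show ?thesis
      unfolding maturation_speed_def v_def by (rule antimonoD[OF f_antimono[OF j]])
  qed
  have "1 = integral {s..t} (maturation_speed j)"
    using delay_integral_eq[OF j] t unfolding s_def by simp
  also have "\<dots> \<le> integral {s..t} (\<lambda>_. v)"
    using speed by (intro integral_le integrable_continuous_real maturation_speed_continuous[OF j]) auto
  also have "\<dots> = \<tau> j t * v" using tau_nonneg[OF j] t unfolding s_def by simp
  also have "\<dots> \<le> delay_cap j * v"
    using delayed_value_at_peak(2)[OF j t pos peak] less_imp_le[OF f_pos[OF j]] unfolding v_def
    by (rule mult_right_mono)
  finally show ?thesis unfolding v_def by simp
qed

lemma peak_threshold:
  "\<exists>M. \<forall>x\<ge>M. \<forall>j<n. P < peak_fraction j * x \<and>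
    delay_cap j * f j (zeta j j * exp (- muA j * delay_cap j) * peak_fraction j * x) < 1"
proof -
  have "eventually (\<lambda>x. \<forall>j\<in>{..<n}. P < peak_fraction j * x \<and>
    delay_cap j * f j (zeta j j * exp (- muA j * delay_cap j) * peak_fraction j * x) < 1) at_top"
  proof (intro eventually_ball_finite finite_lessThan ballI)
    fix j assume "j \<in> {..<n}"
    then have j: "j < n" by simp
    define c where "c = zeta j j * exp (- muA j * delay_cap j) * peak_fraction j"
    have c: "0 < c" unfolding c_def using zeta_diag_pos[OF j] peak_fraction_pos[OF j] by simp
    have "((\<lambda>x. delay_cap j * f j (c * x)) \<longlongrightarrow> delay_cap j * 0) at_top"
      by (intro tendsto_mult tendsto_const filterlim_compose[OF f_tendsto_0[OF j]]
          filterlim_tendsto_pos_mult_at_top[OF tendsto_const c filterlim_ident])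
    then have "eventually (\<lambda>x. delay_cap j * f j (c * x) < 1) at_top"
      by (rule order_tendstoD) simp
    moreover have "eventually (\<lambda>x. P < peak_fraction j * x) at_top"
      using eventually_gt_at_top[of "P / peak_fraction j"]
      by eventually_elim (use peak_fraction_pos[OF j] in \<open>simp add: pos_divide_less_eq mult.commute\<close>)
    ultimately show "eventually (\<lambda>x. P < peak_fraction j * x \<and>
      delay_cap j * f j (zeta j j * exp (- muA j * delay_cap j) * peak_fraction j * x) < 1) at_top"
      unfolding c_def by eventually_elim simp
  qed
  then show ?thesis unfolding eventually_at_top_linorder by auto
qed

definition history_length :: real where
  "history_length = (\<Sum>i<n. tau0 i)"

lemma tau0_le_history_length: "j < n \<Longrightarrow> tau0 j \<le> history_length"
  unfolding history_length_def by (intro member_le_sum tau0_nonneg) auto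

lemma history_length_nonneg: "0 \<le> history_length"
  unfolding history_length_def by (intro sum_nonneg tau0_nonneg) simp

lemma peak_exists:
  assumes "0 < n" "- history_length \<le> T"
  obtains j t where "j < n" "t \<in> {- history_length..T}"
    "\<And>k u. k < n \<Longrightarrow> u \<in> {- history_length..T} \<Longrightarrow> A k u \<le> A j t"
proof -
  have "\<exists>j\<in>{..<n}. \<exists>t\<in>{- history_length..T}. \<forall>k\<in>{..<n}. \<forall>u\<in>{- history_length..T}. A k u \<le> A j t"
    using assms continuous_on_subset[OF A_continuous] by (intro finite_family_attains_sup) auto
  then show ?thesis using that unfolding lessThan_iff by blast
qed

lemma solution_bounded:
  assumes "0 < n"
  shows "\<exists>M. \<forall>k<n. \<forall>t\<ge>0. A k t \<le> M"
proof -
  have "- history_length \<le> 0" using history_length_nonneg by simp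
  then obtain jP tP where "jP < n" and history:
    "\<And>k u. k < n \<Longrightarrow> u \<in> {- history_length..0} \<Longrightarrow> A k u \<le> A jP tP"
    by (rule peak_exists[OF assms]) blast
  define P where "P = A jP tP"
  have "0 \<le> P" unfolding P_def by (rule A_nonneg[OF \<open>jP < n\<close>])
  obtain M where M: "\<And>x j. M \<le> x \<Longrightarrow> j < n \<Longrightarrow> P < peak_fraction j * x \<and>
    delay_cap j * f j (zeta j j * exp (- muA j * delay_cap j) * peak_fraction j * x) < 1"
    using peak_threshold by blast
  have "A k T \<le> max M P" if "k < n" "0 \<le> T" for k T
  proof (rule ccontr)
    assume "\<not> ?thesis"
    have "- history_length \<le> T" using that(2) history_length_nonneg by simp
    then obtain j t where j: "j < n" "t \<in> {- history_length..T}"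
      and peak: "\<And>k u. k < n \<Longrightarrow> u \<in> {- history_length..T} \<Longrightarrow> A k u \<le> A j t"
      by (rule peak_exists[OF assms]) blast
    have "A k T \<le> A j t" using peak[OF that(1)] that(2) history_length_nonneg by simp
    with \<open>\<not> ?thesis\<close> have big: "M < A j t" "P < A j t" by auto
    have "0 < t"
      using history[OF j(1), of t] big(2) j(2) unfolding P_def by (cases "t \<le> 0") auto
    have "peak_fraction j * A j t \<le> P \<or>
      1 \<le> delay_cap j * f j (zeta j j * exp (- muA j * delay_cap j) * peak_fraction j * A j t)"
      using j tau0_le_history_length[OF j(1)] \<open>0 \<le> P\<close> big
      by (intro peak_estimate[OF j(1) \<open>0 < t\<close>]) (auto intro!: peak history[folded P_def])
    with M[of "A j t" j] big j(1) show False by auto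
  qed
  then show ?thesis by blast
qed

lemma delay_vanishes:
  assumes i: "i < n"
  shows "\<exists>t>0. t - \<tau> i t = 0"
proof -
  obtain M where M: "\<And>k t. k < n \<Longrightarrow> 0 \<le> t \<Longrightarrow> A k t \<le> M"
    using solution_bounded i by (metis gr_zeroI not_less_zero)
  define d where "d = f i ((\<Sum>j<n. zeta i j) * M)"
  have "d \<le> maturation_speed i u" if "0 \<le> u" for u
    unfolding d_def maturation_speed_def
    using Z_le[OF i] M that by (intro antimonoD[OF f_antimono[OF i]]) auto
  then obtain t where t: "0 < t" "integral {0..t} (maturation_speed i) = 1"
    using integral_reaches_level[of 0 "maturation_speed i" d 1]
      maturation_speed_continuous[OF i] f_pos[OF i] unfolding d_def by auto
  define s where "s = t - \<tau> i t"
  have "s \<le> t" using tau_nonneg[OF i] t unfolding s_def by simp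
  have "integral {s..t} (maturation_speed i) = 1"
    using delay_integral_eq[OF i] t unfolding s_def by simp
  with t have "integral {min 0 s..t} (maturation_speed i) = 1"
    "integral {max 0 s..t} (maturation_speed i) = 1" by (simp_all add: min_def max_def)
  moreover have "integral {max 0 s..t} (maturation_speed i) < integral {min 0 s..t} (maturation_speed i)"
    if "s \<noteq> 0"
    using that \<open>s \<le> t\<close> t(1)
    by (intro integral_strict_mono_interval maturation_speed_continuous[OF i] maturation_speed_pos[OF i])
      auto
  ultimately show ?thesis using t(1) unfolding s_def by force
qed

end

lemma delay_system_if_solution:
  assumes "assumption_A n muA muJ beta zeta f"
    and "\<forall>i<n. tau0 i \<ge> 0"
    and "\<forall>i<n. integral {- tau0 i..0} (\<lambda>\<sigma>. f i (\<Sum>j<n. zeta i j * \<phi> j \<sigma>)) = 1"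
    and "is_solution_S n muA muJ beta zeta f \<phi> tau0 A \<tau>"
  shows "delay_system n muA muJ beta tau0 zeta f A \<tau>"
proof -
  note A = assms(1)[unfolded assumption_A_def] and S = assms(4)[unfolded is_solution_S_def]
  have antimono: "antimono (f i)" if i: "i < n" for i
  proof (rule antimonoI)
    obtain f' where f': "\<forall>x. (f i has_real_derivative f' x) (at x)" "\<forall>x. f' x \<le> 0"
      using A[rule_format, OF i] by blast
    fix x y :: real
    assume "x \<le> y"
    then show "f i y \<le> f i x"
      by (rule DERIV_nonpos_imp_nonincreasing) (use f' in blast)
  qed
  have continuous: "continuous_on UNIV (f i)" if "i < n" for i
    using A that lipschitz_on_continuous_on by blast
  have history: "integral {- tau0 i..0} (\<lambda>\<sigma>. f i (\<Sum>j<n. zeta i j * A j \<sigma>)) = 1" if "i < n" for i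
  proof -
    have "integral {- tau0 i..0} (\<lambda>\<sigma>. f i (\<Sum>j<n. zeta i j * A j \<sigma>))
        = integral {- tau0 i..0} (\<lambda>\<sigma>. f i (\<Sum>j<n. zeta i j * \<phi> j \<sigma>))"
      using S by (intro integral_cong) auto
    then show ?thesis using assms(3) that by simp
  qed
  show ?thesis
    by unfold_locales (use A S assms(2,3) antimono continuous history in \<open>simp_all\<close>)
qed

theorem lemma3p3:
  fixes n :: nat and \<alpha> :: real
    and muA muJ beta tau0 :: "nat \<Rightarrow> real" and zeta :: "nat \<Rightarrow> nat \<Rightarrow> real"
    and f \<phi> A \<tau> :: "nat \<Rightarrow> real \<Rightarrow> real"
  assumes "\<alpha> > 0"
    and "assumption_A n muA muJ beta zeta f"
    and "\<forall>i<n. \<phi> i \<in> X_alpha \<alpha> \<and> (\<forall>t\<le>0. \<phi> i t \<ge> 0)"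
    and "\<forall>i<n. tau0 i \<ge> 0"
    and "\<forall>i<n. integral {- tau0 i..0} (\<lambda>\<sigma>. f i (\<Sum>j<n. zeta i j * \<phi> j \<sigma>)) = 1"
    and "is_solution_S n muA muJ beta zeta f \<phi> tau0 A \<tau>"
  shows "\<forall>i<n. \<exists>t>0. t - \<tau> i t = 0"
proof -
  interpret delay_system n muA muJ beta tau0 zeta f A \<tau>
    using assms(2,4-6) by (rule delay_system_if_solution)
  show ?thesis using delay_vanishes by blast
qed

end
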